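(* The degree histogram problem (on incremental graph streams, with error measured in $\ell_\infty$) admits an extendable bitwise AND gadget with $v(d)=O(d)$ and $t(d)=O(d^2)$.
   Context: The degree histogram of an $n$-vertex graph is $(d_1,\dots,d_{n-1})$ where $d_i$ is the number of vertices of degree $i$; the range carries the $\ell_\infty$ norm. Let $\zeta\in\mathbb N$ be a fixed constant and $m=\zeta d$. An extendable bitwise AND gadget for a graph function $g$ consists of positive increasing functions $v,t:\mathbb N\to\mathbb N$ and, for each $d$: an initial graph $H_{\mathrm{init}}=(V,E_0)$ with $|V|=v(d)$; edges $e_1,\dots,e_d\in\binom V2$, defining $H^1_x=H_{\mathrm{init}}\cup\{e_i: x_i=1\}$ for $x\in\{0,1\}^d$; and for every sequence of queries $q^1,\dots,q^m\in\{0,1\}^d$, edge sets $S^1,T^1,\dots,S^m,T^m$ and functions $\mathrm{dec}_j:\mathrm{Range}(g)\to\mathbb R$ (depending on the queries but not on $x$) such that: (a) each $\mathrm{dec}_j$ is $1$-Lipschitz with respect to the norm on $\mathrm{Range}(g)$; (b) with $Q^j_x=H^j_x\cup S^j$, $\mathrm{dec}_j(g(Q^j_x))-\mathrm{dec}_j(g(H^j_x))=\langle x,q^j\rangle$ for all $x$; (c) $H^{j+1}_x=Q^j_x\cup T^j$; and the total number of edge insertions $|E_0|+d+\sum_j(|S^j|+|T^j|)$ is at most $t(d)$. *)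

theory Defs
  imports Main "HOL-Library.Landau_Symbols"
begin

definition edges_on :: "nat set \<Rightarrow> nat set set" where
  "edges_on V = {e. e \<subseteq> V \<and> card e = 2}"

definition vdegree :: "nat set set \<Rightarrow> nat \<Rightarrow> nat" where
  "vdegree E u = card {e \<in> E. u \<in> e}"

definition deg_hist :: "nat set \<Rightarrow> nat set set \<Rightarrow> (nat \<Rightarrow> real)" where
  "deg_hist V E = (\<lambda>i. if 1 \<le> i \<and> i < card V
                        then real (card {u \<in> V. vdegree E u = i}) else 0)"

definition linf_dist :: "nat \<Rightarrow> (nat \<Rightarrow> real) \<Rightarrow> (nat \<Rightarrow> real) \<Rightarrow> real" where
  "linf_dist n a b = Max (insert 0 ((\<lambda>i. \<bar>a i - b i\<bar>) ` {1..<n}))"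

text \<open>Bit vectors in {0,1}^d are represented as nat => bool, coordinates 0..d-1.\<close>

definition bit_inner :: "nat \<Rightarrow> (nat \<Rightarrow> bool) \<Rightarrow> (nat \<Rightarrow> bool) \<Rightarrow> real" where
  "bit_inner d x q = real (card {i. i < d \<and> x i \<and> q i})"

text \<open>The graphs H^{j+1}_x of the paper (0-indexed here: Hs ... j is H^{j+1}_x).\<close>

fun Hs :: "nat set set \<Rightarrow> (nat \<Rightarrow> nat set) \<Rightarrow> nat \<Rightarrow> (nat \<Rightarrow> nat set set) \<Rightarrow>
           (nat \<Rightarrow> nat set set) \<Rightarrow> (nat \<Rightarrow> bool) \<Rightarrow> nat \<Rightarrow> nat set set" where
  "Hs E0 e d S T x 0 = E0 \<union> {e i | i. i < d \<and> x i}"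
| "Hs E0 e d S T x (Suc j) = Hs E0 e d S T x j \<union> S j \<union> T j"

text \<open>Extendable bitwise AND gadget for a graph function g (values nat => real) whose
  range carries the distance dist (depending on the number of vertices), with m = zeta*d
  queries. Queries q^{j+1} = qs j, j < m.\<close>

definition ext_AND_gadget ::
  "(nat set \<Rightarrow> nat set set \<Rightarrow> (nat \<Rightarrow> real)) \<Rightarrow>
   (nat \<Rightarrow> (nat \<Rightarrow> real) \<Rightarrow> (nat \<Rightarrow> real) \<Rightarrow> real) \<Rightarrow>
   nat \<Rightarrow> (nat \<Rightarrow> nat) \<Rightarrow> (nat \<Rightarrow> nat) \<Rightarrow> bool" where
  "ext_AND_gadget g \<delta> \<zeta> v t \<longleftrightarrow>
     (\<forall>d. 0 < v d \<and> 0 < t d) \<and> mono v \<and> mono t \<and>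
     (\<forall>d. \<exists>V E0 e.
        finite V \<and> card V = v d \<and> E0 \<subseteq> edges_on V \<and> (\<forall>i<d. e i \<in> edges_on V) \<and>
        (\<forall>qs :: nat \<Rightarrow> nat \<Rightarrow> bool. \<exists>S T dec.
           (\<forall>j < \<zeta> * d. S j \<subseteq> edges_on V \<and> T j \<subseteq> edges_on V) \<and>
           (\<forall>j < \<zeta> * d. \<forall>a b. \<bar>dec j a - dec j b\<bar> \<le> \<delta> (card V) a b) \<and>
           (\<forall>j < \<zeta> * d. \<forall>x.
              dec j (g V (Hs E0 e d S T x j \<union> S j)) - dec j (g V (Hs E0 e d S T x j))
                = bit_inner d x (qs j)) \<and>
           card E0 + d + (\<Sum>j<\<zeta> * d. card (S j) + card (T j)) \<le> t d))"

end

theory Submission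
  imports Defs
begin

text \<open>
  Bit vertex i < d is joined to the d + 1 padding vertices 2d, ..., 3d and, by bit edge i, to its
  private partner d + i, so it starts with degree d + 1 + x_i. Query j adds a fresh vertex 3d + 1 + j:
  S^j joins it to the bit vertices with q^j_i = 1 and T^j to all others. Hence before S^j bit vertex i
  has degree d + 1 + j + x_i, after S^j degree d + 1 + j + x_i + q^j_i, and every other vertex has
  degree at most d. The histogram entry at degree d + 3 + j therefore jumps from 0 to the inner
  product of x and q^j, and dec_j is evaluation at this coordinate, which is 1-Lipschitz for the
  l-infinity distance. The graph has (3 + zeta) d + 1 vertices and at most
  d(d + 1) + d + 2 zeta d^2 edge insertions.
\<close>

definition bipartite_edges :: "nat \<Rightarrow> (nat \<Rightarrow> nat set) \<Rightarrow> nat set set" where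
  "bipartite_edges d N = {{i, w} | i w. i < d \<and> w \<in> N i}"

lemma bipartite_edges_Un:
  "bipartite_edges d N \<union> bipartite_edges d M = bipartite_edges d (\<lambda>i. N i \<union> M i)"
  unfolding bipartite_edges_def by blast

lemma bipartite_edges_subset_edges_on:
  assumes "\<And>i. i < d \<Longrightarrow> N i \<subseteq> V \<inter> {d..}" and "{..<d} \<subseteq> V"
  shows "bipartite_edges d N \<subseteq> edges_on V"
  using assms unfolding bipartite_edges_def edges_on_def by fastforce

lemma card_bipartite_edges_le:
  assumes "\<And>i. i < d \<Longrightarrow> finite (N i) \<and> card (N i) \<le> b"
  shows "card (bipartite_edges d N) \<le> d * b"
proof -
  have "bipartite_edges d N = (\<Union>i<d. (\<lambda>w. {i, w}) ` N i)"
    unfolding bipartite_edges_def by blast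
  then have "card (bipartite_edges d N) \<le> (\<Sum>i<d. card ((\<lambda>w. {i, w}) ` N i))"
    by (simp add: card_UN_le)
  also have "\<dots> \<le> (\<Sum>i<d. b)"
    using assms by (intro sum_mono) (meson card_image_le le_trans lessThan_iff)
  finally show ?thesis by simp
qed

lemma vdegree_bipartite_edges_left:
  assumes "\<And>i. i < d \<Longrightarrow> N i \<subseteq> {d..}" and "i < d"
  shows "vdegree (bipartite_edges d N) i = card (N i)"
proof -
  have "{e \<in> bipartite_edges d N. i \<in> e} = (\<lambda>w. {i, w}) ` N i"
    using assms unfolding bipartite_edges_def by fastforce
  moreover have "inj_on (\<lambda>w. {i, w}) (N i)"
    using assms by (auto simp: inj_on_def doubleton_eq_iff)
  ultimately show ?thesis
    unfolding vdegree_def by (simp add: card_image)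
qed

lemma vdegree_bipartite_edges_right:
  assumes "\<And>i. i < d \<Longrightarrow> N i \<subseteq> {d..}" and "d \<le> u"
  shows "vdegree (bipartite_edges d N) u \<le> d"
proof -
  have "{e \<in> bipartite_edges d N. u \<in> e} \<subseteq> (\<lambda>i. {i, u}) ` {..<d}"
    using assms unfolding bipartite_edges_def by fastforce
  then have "vdegree (bipartite_edges d N) u \<le> card ((\<lambda>i. {i, u}) ` {..<d})"
    unfolding vdegree_def by (intro card_mono) auto
  also have "\<dots> \<le> d"
    using card_image_le[of "{..<d}"] by simp
  finally show ?thesis .
qed

lemma deg_hist_bipartite_edges:
  assumes "\<And>i. i < d \<Longrightarrow> N i \<subseteq> {d..}" and "{..<d} \<subseteq> V" and "d < k" and "k < card V"
  shows "deg_hist V (bipartite_edges d N) k = card {i. i < d \<and> card (N i) = k}"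
proof -
  have "{u \<in> V. vdegree (bipartite_edges d N) u = k} = {i. i < d \<and> card (N i) = k}"
  proof (intro set_eqI iffI)
    fix u assume "u \<in> {u \<in> V. vdegree (bipartite_edges d N) u = k}"
    moreover have "u < d"
      using vdegree_bipartite_edges_right[OF assms(1), where u = u] calculation \<open>d < k\<close>
      by fastforce
    ultimately show "u \<in> {i. i < d \<and> card (N i) = k}"
      using vdegree_bipartite_edges_left[OF assms(1)] by simp
  next
    fix u assume "u \<in> {i. i < d \<and> card (N i) = k}"
    then show "u \<in> {u \<in> V. vdegree (bipartite_edges d N) u = k}"
      using vdegree_bipartite_edges_left[OF assms(1)] assms(2) by auto
  qed
  then show ?thesis
    using assms(3,4) unfolding deg_hist_def by simp
qed

lemma abs_diff_le_linf_dist: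
  assumes "k \<in> {1..<n}"
  shows "\<bar>a k - b k\<bar> \<le> linf_dist n a b"
  unfolding linf_dist_def using assms by (intro Max_ge) auto

definition gadget_init :: "nat \<Rightarrow> nat set set" where
  "gadget_init d = bipartite_edges d (\<lambda>_. {2*d..3*d})"

definition gadget_bit_edge :: "nat \<Rightarrow> nat \<Rightarrow> nat set" where
  "gadget_bit_edge d i = {i, d + i}"

definition gadget_S :: "nat \<Rightarrow> (nat \<Rightarrow> nat \<Rightarrow> bool) \<Rightarrow> nat \<Rightarrow> nat set set" where
  "gadget_S d qs j = bipartite_edges d (\<lambda>i. if qs j i then {3*d + 1 + j} else {})"

definition gadget_T :: "nat \<Rightarrow> (nat \<Rightarrow> nat \<Rightarrow> bool) \<Rightarrow> nat \<Rightarrow> nat set set" where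
  "gadget_T d qs j = bipartite_edges d (\<lambda>i. if qs j i then {} else {3*d + 1 + j})"

abbreviation gadget_H :: "nat \<Rightarrow> (nat \<Rightarrow> nat \<Rightarrow> bool) \<Rightarrow> (nat \<Rightarrow> bool) \<Rightarrow> nat \<Rightarrow> nat set set" where
  "gadget_H d qs \<equiv> Hs (gadget_init d) (gadget_bit_edge d) d (gadget_S d qs) (gadget_T d qs)"

lemma gadget_H_eq:
  "gadget_H d qs x j = bipartite_edges d (\<lambda>i. {2*d..<3*d + 1 + j} \<union> (if x i then {d + i} else {}))"
proof (induction j)
  case 0
  have "{gadget_bit_edge d i | i. i < d \<and> x i} = bipartite_edges d (\<lambda>i. if x i then {d + i} else {})"
    unfolding gadget_bit_edge_def bipartite_edges_def by (auto split: if_splits)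
  then show ?case
    by (simp add: gadget_init_def bipartite_edges_Un atLeastLessThanSuc_atLeastAtMost)
next
  case (Suc j)
  have "gadget_S d qs j \<union> gadget_T d qs j = bipartite_edges d (\<lambda>_. {3*d + 1 + j})"
    unfolding gadget_S_def gadget_T_def bipartite_edges_Un
    by (rule arg_cong[where f = "bipartite_edges d"]) (simp add: fun_eq_iff)
  then have "gadget_H d qs x (Suc j) = gadget_H d qs x j \<union> bipartite_edges d (\<lambda>_. {3*d + 1 + j})"
    by (simp add: Un_assoc)
  also have "\<dots> = bipartite_edges d (\<lambda>i. {2*d..<3*d + 1 + Suc j} \<union> (if x i then {d + i} else {}))"
    unfolding Suc bipartite_edges_Un by (rule arg_cong[where f = "bipartite_edges d"]) auto
  finally show ?case .
qed

lemma card_gadget_neighbours: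
  assumes "i < d"
  shows "card ({2*d..<3*d + 1 + j} \<union> (if b then {d + i} else {}) \<union> (if q then {3*d + 1 + j} else {}))
    = d + 1 + j + of_bool b + of_bool q"
  using assms by auto

lemma gadget_H_S_eq:
  "gadget_H d qs x j \<union> gadget_S d qs j = bipartite_edges d (\<lambda>i.
     {2*d..<3*d + 1 + j} \<union> (if x i then {d + i} else {}) \<union> (if qs j i then {3*d + 1 + j} else {}))"
  unfolding gadget_H_eq gadget_S_def bipartite_edges_Un ..

lemma deg_hist_gadget_H:
  assumes "{..<d} \<subseteq> V" and "d + 3 + j < card V"
  shows "deg_hist V (gadget_H d qs x j) (d + 3 + j) = 0"
proof -
  have "deg_hist V (gadget_H d qs x j) (d + 3 + j)
      = card {i. i < d \<and> card ({2*d..<3*d + 1 + j} \<union> (if x i then {d + i} else {})) = d + 3 + j}"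
    unfolding gadget_H_eq using assms by (intro deg_hist_bipartite_edges) auto
  also have "\<dots> = 0"
    using card_gadget_neighbours[where q = False] by simp
  finally show ?thesis .
qed

lemma deg_hist_gadget_H_S:
  assumes "{..<d} \<subseteq> V" and "d + 3 + j < card V"
  shows "deg_hist V (gadget_H d qs x j \<union> gadget_S d qs j) (d + 3 + j) = bit_inner d x (qs j)"
proof -
  have "deg_hist V (gadget_H d qs x j \<union> gadget_S d qs j) (d + 3 + j)
      = card {i. i < d \<and> card ({2*d..<3*d + 1 + j} \<union> (if x i then {d + i} else {})
                               \<union> (if qs j i then {3*d + 1 + j} else {})) = d + 3 + j}"
    unfolding gadget_H_S_eq using assms by (intro deg_hist_bipartite_edges) auto
  also have "\<dots> = card {i. i < d \<and> x i \<and> qs j i}"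
    by (simp add: card_gadget_neighbours cong: conj_cong) (meson)
  finally show ?thesis
    unfolding bit_inner_def by simp
qed

lemma ext_AND_gadget_deg_hist:
  "ext_AND_gadget deg_hist linf_dist \<zeta> (\<lambda>d. 3*d + 1 + \<zeta>*d) (\<lambda>d. d*(d + 1) + d + 2*\<zeta>*d*d + 1)"
  unfolding ext_AND_gadget_def
proof (intro conjI allI)
  show "mono (\<lambda>d. 3*d + 1 + \<zeta>*d)" "mono (\<lambda>d. d*(d + 1) + d + 2*\<zeta>*d*d + 1)"
    by (intro monoI add_mono mult_le_mono; simp)+
  fix d :: nat
  define V where "V = {..<3*d + 1 + \<zeta>*d}"
  have bits: "{..<d} \<subseteq> V" and card_V: "card V = 3*d + 1 + \<zeta>*d"
    unfolding V_def by auto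
  have query_index: "d + 3 + j < card V" if "j < \<zeta>*d" for j
    using that card_V by (cases d) auto
  show "0 < 3*d + 1 + \<zeta>*d" "0 < d*(d + 1) + d + 2*\<zeta>*d*d + 1"
    by simp_all
  show "\<exists>V E0 e. finite V \<and> card V = 3*d + 1 + \<zeta>*d \<and> E0 \<subseteq> edges_on V \<and> (\<forall>i<d. e i \<in> edges_on V) \<and>
        (\<forall>qs. \<exists>S T dec.
           (\<forall>j < \<zeta>*d. S j \<subseteq> edges_on V \<and> T j \<subseteq> edges_on V) \<and>
           (\<forall>j < \<zeta>*d. \<forall>a b. \<bar>dec j a - dec j b\<bar> \<le> linf_dist (card V) a b) \<and>
           (\<forall>j < \<zeta>*d. \<forall>x.
              dec j (deg_hist V (Hs E0 e d S T x j \<union> S j)) - dec j (deg_hist V (Hs E0 e d S T x j))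
                = bit_inner d x (qs j)) \<and>
           card E0 + d + (\<Sum>j<\<zeta>*d. card (S j) + card (T j)) \<le> d*(d + 1) + d + 2*\<zeta>*d*d + 1)"
  proof (intro exI conjI allI impI)
    show "finite V" "card V = 3*d + 1 + \<zeta>*d"
      using card_V unfolding V_def by simp_all
    show "gadget_init d \<subseteq> edges_on V"
      unfolding gadget_init_def using bits by (intro bipartite_edges_subset_edges_on) (auto simp: V_def)
    show "gadget_bit_edge d i \<in> edges_on V" if "i < d" for i
      using that unfolding gadget_bit_edge_def edges_on_def V_def by auto
    fix qs :: "nat \<Rightarrow> nat \<Rightarrow> bool" and j
    assume j: "j < \<zeta>*d"
    show "gadget_S d qs j \<subseteq> edges_on V" "gadget_T d qs j \<subseteq> edges_on V"
      unfolding gadget_S_def gadget_T_def using bits j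
      by (intro bipartite_edges_subset_edges_on; auto simp: V_def)+
    show "\<bar>a (d + 3 + j) - b (d + 3 + j)\<bar> \<le> linf_dist (card V) a b" for a b :: "nat \<Rightarrow> real"
      using query_index[OF j] by (intro abs_diff_le_linf_dist) auto
    show "deg_hist V (gadget_H d qs x j \<union> gadget_S d qs j) (d + 3 + j)
        - deg_hist V (gadget_H d qs x j) (d + 3 + j) = bit_inner d x (qs j)" for x
      using deg_hist_gadget_H_S[OF bits query_index[OF j]] deg_hist_gadget_H[OF bits query_index[OF j]]
      by simp
  next
    fix qs :: "nat \<Rightarrow> nat \<Rightarrow> bool"
    have init: "card (gadget_init d) \<le> d*(d + 1)"
      unfolding gadget_init_def by (intro card_bipartite_edges_le) auto
    have "card (gadget_S d qs j) + card (gadget_T d qs j) \<le> 2*d" for j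
    proof -
      have "card (gadget_S d qs j) \<le> d * 1" "card (gadget_T d qs j) \<le> d * 1"
        unfolding gadget_S_def gadget_T_def by (intro card_bipartite_edges_le; simp)+
      then show ?thesis
        by simp
    qed
    then have "(\<Sum>j<\<zeta>*d. card (gadget_S d qs j) + card (gadget_T d qs j)) \<le> (\<Sum>j<\<zeta>*d. 2*d)"
      by (intro sum_mono)
    also have "\<dots> = 2*\<zeta>*d*d"
      by simp
    finally show "card (gadget_init d) + d + (\<Sum>j<\<zeta>*d. card (gadget_S d qs j) + card (gadget_T d qs j))
        \<le> d*(d + 1) + d + 2*\<zeta>*d*d + 1"
      using init by linarith
  qed
qed

lemma bigo_real_of_nat:
  fixes f g :: "nat \<Rightarrow> nat"
  assumes "\<And>n. 1 \<le> n \<Longrightarrow> f n \<le> c * g n"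
  shows "(\<lambda>n. real (f n)) \<in> O(\<lambda>n. real (g n))"
proof (rule bigoI[where c = "real c"])
  show "\<forall>\<^sub>F n in at_top. norm (real (f n)) \<le> real c * norm (real (g n))"
    using eventually_ge_at_top[of "1::nat"]
    by eventually_elim (use assms in \<open>simp flip: of_nat_mult\<close>)
qed

lemma gadget_size_bigo: "(\<lambda>d. real (3*d + 1 + \<zeta>*d)) \<in> O(\<lambda>d. real d)"
  by (rule bigo_real_of_nat[where c = "4 + \<zeta>"]) (simp add: algebra_simps)

lemma gadget_cost_bigo: "(\<lambda>d. real (d*(d + 1) + d + 2*\<zeta>*d*d + 1)) \<in> O(\<lambda>d. (real d)^2)"
proof -
  have "d*(d + 1) + d + 2*\<zeta>*d*d + 1 \<le> (4 + 2*\<zeta>) * d^2" if "1 \<le> d" for d :: nat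
  proof -
    have "d \<le> d*d" "1 \<le> d*d"
      using that by simp_all
    moreover have "d*(d + 1) + d + 2*\<zeta>*d*d + 1 = d*d + 2*d + 1 + 2*\<zeta>*(d*d)"
      and "(4 + 2*\<zeta>) * d^2 = 4*(d*d) + 2*\<zeta>*(d*d)"
      by (simp_all add: algebra_simps power2_eq_square)
    ultimately show ?thesis
      by linarith
  qed
  then have "(\<lambda>d. real (d*(d + 1) + d + 2*\<zeta>*d*d + 1)) \<in> O(\<lambda>d. real (d^2))"
    by (rule bigo_real_of_nat)
  then show ?thesis
    by (simp only: of_nat_power)
qed

theorem mainTheorem5:
  fixes \<zeta> :: nat
  shows "\<exists>v t. ext_AND_gadget deg_hist linf_dist \<zeta> v t \<and>
           (\<lambda>d. real (v d)) \<in> O(\<lambda>d. real d) \<and>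
           (\<lambda>d. real (t d)) \<in> O(\<lambda>d. (real d)^2)"
  using ext_AND_gadget_deg_hist gadget_size_bigo gadget_cost_bigo by blast

end
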